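(* Let $n\ge 3$ and let $(\alpha,\beta)$ satisfy $\beta\ge 0$, $0<\alpha+\beta<n-\beta$ and $\frac{n-\alpha-2\beta}{2n}+\frac{n-\alpha}{2(n-1)}<1$. Let $\varphi\in C^1_c(\mathbb R^{n-1})$ and fix $0<\theta<\min\{1,\beta+\frac1q\}$. Then for all $f\in L^p(\mathbb R^{n-1})$ and all $x_n>0$, $$\big\|\varphi(\cdot)E_{\alpha,\beta}(f)(\cdot,x_n)-E_{\alpha,\beta}(\varphi f)(\cdot,x_n)\big\|_{L^q(\mathbb R^{n-1})}\lesssim x_n^{\theta-\frac1q}\|\varphi\|_{C^1(\mathbb R^{n-1})}\|f\|_{L^p(\mathbb R^{n-1})},$$ with implied constant depending only on $n,\alpha,\beta,\theta$.
   Context: $p=\frac{2(n-1)}{n+\alpha-2}$, $q=\frac{2n}{n-\alpha-2\beta}$. For $f$ on $\mathbb R^{n-1}$ and $(x',x_n)\in\mathbb R^{n-1}\times(0,\infty)$, $E_{\alpha,\beta}(f)(x',x_n)=\int_{\mathbb R^{n-1}}\frac{x_n^\beta f(y')}{(x_n^2+|x'-y'|^2)^{\frac{n-\alpha}{2}}}\,\mathrm dy'$. $\|\varphi\|_{C^1}=\|\varphi\|_{L^\infty}+\|\nabla\varphi\|_{L^\infty}$. *)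

theory Defs
  imports "HOL-Analysis.Analysis"
begin

text \<open>Euclidean space R^(n-1) is modelled by a type 'a :: euclidean_space with
  DIM('a) = n - 1, carrying Lebesgue measure.\<close>

definition has_compact_support :: "('a::euclidean_space \<Rightarrow> real) \<Rightarrow> bool" where
  "has_compact_support \<phi> \<longleftrightarrow> (\<exists>K. compact K \<and> (\<forall>x. x \<notin> K \<longrightarrow> \<phi> x = 0))"

definition in_Lp :: "real \<Rightarrow> ('a::euclidean_space \<Rightarrow> real) \<Rightarrow> bool" where
  "in_Lp r g \<longleftrightarrow> g \<in> borel_measurable lebesgue \<and>
     (\<integral>\<^sup>+ x. ennreal (\<bar>g x\<bar> powr r) \<partial>lebesgue) < \<infinity>"

definition Lp_norm :: "real \<Rightarrow> ('a::euclidean_space \<Rightarrow> real) \<Rightarrow> real" where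
  "Lp_norm r g = enn2real (\<integral>\<^sup>+ x. ennreal (\<bar>g x\<bar> powr r) \<partial>lebesgue) powr (1 / r)"

text \<open>C^1 norm: sup norm of phi plus sup of the (operator = Euclidean) norm of its derivative.\<close>
definition C1_norm :: "('a::euclidean_space \<Rightarrow> real) \<Rightarrow> ('a \<Rightarrow> ('a \<Rightarrow>\<^sub>L real)) \<Rightarrow> real" where
  "C1_norm \<phi> \<phi>' = (SUP x. \<bar>\<phi> x\<bar>) + (SUP x. norm (\<phi>' x))"

text \<open>E_{alpha,beta}(f)(x', t) with n = DIM('a) + 1.\<close>
definition E_op :: "real \<Rightarrow> real \<Rightarrow> ('a::euclidean_space \<Rightarrow> real) \<Rightarrow> 'a \<Rightarrow> real \<Rightarrow> real" where
  "E_op \<alpha> \<beta> f x t = (\<integral> y. t powr \<beta> * f y /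
      (t\<^sup>2 + (norm (x - y))\<^sup>2) powr ((real DIM('a) + 1 - \<alpha>) / 2) \<partial>lebesgue)"

end

(*
  With K_t(z) = t^beta / (t^2 + |z|^2)^((n - alpha)/2), the commutator equals
  the integral of (phi(x) - phi(y)) f(y) K_t(x - y) dy.  A compactly supported C^1 function
  is theta-Hoelder with constant 2 ||phi||_C1, so the commutator is dominated pointwise by the
  convolution of |f| with |z|^theta K_t(z).  Young's convolution inequality with
  1/p + 1/r = 1 + 1/q bounds this in L^q by || |z|^theta K_t ||_r ||f||_p, and the substitution
  z = t w gives || |z|^theta K_t ||_r = t^(theta - 1/q) || |w|^theta K_1 ||_r, which is finite
  because theta < beta + 1/q.  That K_t itself lies in L^r makes both integrals of the
  commutator absolutely convergent almost everywhere.
*)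

theory Submission
  imports Defs
begin

lemma Youngs_inequality_0_nonneg:
  fixes a b u v :: real
  assumes "a \<ge> 0" "b \<ge> 0" "u \<ge> 0" "v \<ge> 0" "u + v = 1"
  shows "a powr u * b powr v \<le> u * a + v * b"
  using Youngs_inequality_0[of u v a b] assms by (cases "a = 0 \<or> b = 0") auto

lemma weighted_geometric_mean_le3:
  fixes a b c u v w :: real
  assumes "a \<ge> 0" "b \<ge> 0" "c \<ge> 0" "u > 0" "v > 0" "w > 0" "u + v + w = 1"
  shows "a powr u * b powr v * c powr w \<le> u * a + v * b + w * c"
proof -
  define m where "m = b powr (v / (v + w)) * c powr (w / (v + w))"
  have "m powr (v + w) = b powr v * c powr w"
    using assms by (simp add: m_def powr_mult powr_powr)
  then have "a powr u * b powr v * c powr w = a powr u * m powr (v + w)"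
    by simp
  also have "\<dots> \<le> u * a + (v + w) * m"
    using assms by (intro Youngs_inequality_0_nonneg) (auto simp: m_def)
  also have "m \<le> v / (v + w) * b + w / (v + w) * c"
    unfolding m_def using assms
    by (intro Youngs_inequality_0_nonneg) (auto simp: add_divide_distrib[symmetric])
  then have "u * a + (v + w) * m \<le> u * a + (v + w) * (v / (v + w) * b + w / (v + w) * c)"
    using assms by (intro add_left_mono mult_left_mono) auto
  also have "\<dots> = u * a + v * b + w * c"
    using assms by (simp add: distrib_left)
  finally show ?thesis .
qed

lemma powr_powr_split:
  fixes z r a b :: real
  assumes "z \<ge> 0" "r * (a + b) = 1"
  shows "(z powr r) powr a * (z powr r) powr b = z"
  using assms by (cases "z = 0") (auto simp: powr_powr powr_add[symmetric] distrib_left)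

lemma mult_powr_powr_eq:
  fixes z q r :: real
  assumes "z \<ge> 0" "q > 0" "r > 0"
  shows "z * (z powr (1 / r - 1 / q)) powr q = z powr (q / r)"
proof (cases "z = 0")
  case False
  then have "z * (z powr (1 / r - 1 / q)) powr q = z powr (1 + (1 / r - 1 / q) * q)"
    using assms by (simp add: powr_powr powr_mult_base)
  also have "1 + (1 / r - 1 / q) * q = q / r"
    using assms by (simp add: field_simps)
  finally show ?thesis .
qed simp

lemma AE_eq_0_if_nn_integral_eq_0:
  fixes F :: "'b \<Rightarrow> real"
  assumes "F \<in> borel_measurable M" "\<And>x. F x \<ge> 0" "(\<integral>\<^sup>+x. ennreal (F x) \<partial>M) = 0"
  shows "AE x in M. F x = 0"
proof -
  have "AE x in M. ennreal (F x) = 0"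
    using assms by (subst (asm) nn_integral_0_iff_AE) auto
  then show ?thesis
    using assms(2) by (auto elim!: eventually_mono simp: ennreal_eq_0_iff intro: antisym)
qed

lemma nn_integral_Holder3:
  fixes F G H :: "'b \<Rightarrow> real"
  assumes [measurable]: "F \<in> borel_measurable M" "G \<in> borel_measurable M" "H \<in> borel_measurable M"
    and nn: "\<And>x. F x \<ge> 0" "\<And>x. G x \<ge> 0" "\<And>x. H x \<ge> 0"
    and uvw: "u > 0" "v > 0" "w > 0" "u + v + w = 1"
    and IF: "(\<integral>\<^sup>+x. ennreal (F x) \<partial>M) = ennreal A" "A \<ge> 0"
    and IG: "(\<integral>\<^sup>+x. ennreal (G x) \<partial>M) = ennreal B" "B \<ge> 0"
    and IH: "(\<integral>\<^sup>+x. ennreal (H x) \<partial>M) = ennreal C" "C \<ge> 0"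
  shows "(\<integral>\<^sup>+x. ennreal (F x powr u * G x powr v * H x powr w) \<partial>M)
          \<le> ennreal (A powr u * B powr v * C powr w)"
proof (cases "A = 0 \<or> B = 0 \<or> C = 0")
  case True
  then have "AE x in M. F x = 0 \<or> G x = 0 \<or> H x = 0"
    using AE_eq_0_if_nn_integral_eq_0[of F M] AE_eq_0_if_nn_integral_eq_0[of G M]
      AE_eq_0_if_nn_integral_eq_0[of H M] nn IF IG IH
    by (auto elim!: eventually_mono)
  then have "(\<integral>\<^sup>+x. ennreal (F x powr u * G x powr v * H x powr w) \<partial>M) = (\<integral>\<^sup>+x. 0 \<partial>M)"
    by (intro nn_integral_cong_AE) (auto elim!: eventually_mono)
  then show ?thesis by simp
next
  case False
  with IF IG IH have pos: "A > 0" "B > 0" "C > 0" by auto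
  define K where "K = A powr u * B powr v * C powr w"
  define R where "R x = K * (u / A * F x + v / B * G x + w / C * H x)" for x
  have "has_bochner_integral M R (K * (u / A * A + v / B * B + w / C * C))"
    unfolding R_def using IF IG IH nn
    by (intro has_bochner_integral_mult_right has_bochner_integral_add
          has_bochner_integral_nn_integral) auto
  then have R_integral: "has_bochner_integral M R K"
    using pos uvw by simp
  have pointwise: "F x powr u * G x powr v * H x powr w \<le> R x" for x
  proof -
    have "F x powr u * G x powr v * H x powr w
        = K * ((F x / A) powr u * (G x / B) powr v * (H x / C) powr w)"
      unfolding K_def using nn pos by (simp add: powr_divide field_simps)
    also have "\<dots> \<le> K * (u * (F x / A) + v * (G x / B) + w * (H x / C))"
      using nn pos uvw by (intro mult_left_mono weighted_geometric_mean_le3) (simp_all add: K_def)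
    finally show ?thesis
      by (simp add: R_def)
  qed
  then have "R x \<ge> 0" for x
    by (rule order_trans[rotated]) simp
  then have "(\<integral>\<^sup>+x. ennreal (R x) \<partial>M) = ennreal K"
    using R_integral by (simp add: nn_integral_eq_integral has_bochner_integral_iff)
  moreover have "(\<integral>\<^sup>+x. ennreal (F x powr u * G x powr v * H x powr w) \<partial>M)
      \<le> (\<integral>\<^sup>+x. ennreal (R x) \<partial>M)"
    using pointwise by (intro nn_integral_mono ennreal_leI)
  ultimately show ?thesis
    unfolding K_def by simp
qed

lemma nn_integral_lborel_affine:
  fixes t :: "'a::euclidean_space" and F :: "'a \<Rightarrow> ennreal"
  assumes [measurable]: "F \<in> borel_measurable borel" and c: "c \<noteq> 0"
  shows "(\<integral>\<^sup>+x. F x \<partial>lborel) = ennreal (\<bar>c\<bar> ^ DIM('a)) * (\<integral>\<^sup>+x. F (t + c *\<^sub>R x) \<partial>lborel)"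
  by (subst lborel_affine[OF c, of t])
    (simp add: nn_integral_density nn_integral_distr nn_integral_cmult)

lemma nn_integral_lborel_reflect:
  fixes F :: "'a::euclidean_space \<Rightarrow> ennreal"
  assumes "F \<in> borel_measurable borel"
  shows "(\<integral>\<^sup>+y. F (x - y) \<partial>lborel) = (\<integral>\<^sup>+z. F z \<partial>lborel)"
  using nn_integral_lborel_affine[OF assms, of "-1" x] by simp

lemma nn_integral_lborel_translate:
  fixes F :: "'a::euclidean_space \<Rightarrow> ennreal"
  assumes "F \<in> borel_measurable borel"
  shows "(\<integral>\<^sup>+x. F (x - y) \<partial>lborel) = (\<integral>\<^sup>+z. F z \<partial>lborel)"
  using nn_integral_lborel_affine[OF assms, of 1 "-y"] by simp

lemma nn_integral_convolution:
  fixes F G :: "'a::euclidean_space \<Rightarrow> ennreal"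
  assumes [measurable]: "F \<in> borel_measurable borel" "G \<in> borel_measurable borel"
  shows "(\<integral>\<^sup>+x. (\<integral>\<^sup>+y. F (x - y) * G y \<partial>lborel) \<partial>lborel)
       = (\<integral>\<^sup>+z. F z \<partial>lborel) * (\<integral>\<^sup>+y. G y \<partial>lborel)"
proof -
  have "(\<integral>\<^sup>+x. (\<integral>\<^sup>+y. F (x - y) * G y \<partial>lborel) \<partial>lborel)
      = (\<integral>\<^sup>+y. (\<integral>\<^sup>+x. F (x - y) * G y \<partial>lborel) \<partial>lborel)"
    by (rule lborel_pair.Fubini') measurable
  also have "\<dots> = (\<integral>\<^sup>+y. (\<integral>\<^sup>+z. F z \<partial>lborel) * G y \<partial>lborel)"
    by (simp add: nn_integral_multc nn_integral_lborel_translate)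
  finally show ?thesis
    by (simp add: nn_integral_cmult)
qed

lemma nn_integral_convolution_le_Holder:
  fixes k g :: "'a::euclidean_space \<Rightarrow> real"
  assumes [measurable]: "k \<in> borel_measurable borel" "g \<in> borel_measurable borel"
    and nn: "\<And>z. k z \<ge> 0" "\<And>z. g z \<ge> 0"
    and exps: "p > 1" "r > 1" "q > 0" "1 / p + 1 / r = 1 + 1 / q"
    and Ik: "(\<integral>\<^sup>+z. ennreal (k z powr r) \<partial>lborel) = ennreal KR" "KR \<ge> 0"
    and Ig: "(\<integral>\<^sup>+y. ennreal (g y powr p) \<partial>lborel) = ennreal GP" "GP \<ge> 0"
    and Ix: "(\<integral>\<^sup>+y. ennreal (k (x - y) powr r * g y powr p) \<partial>lborel) = ennreal H" "H \<ge> 0"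
  shows "(\<integral>\<^sup>+y. ennreal (k (x - y) * g y) \<partial>lborel)
           \<le> ennreal (H powr (1 / q) * KR powr (1 / r - 1 / q) * GP powr (1 / p - 1 / q))"
proof -
  have r_split: "r * (1 / q + (1 / r - 1 / q)) = 1" and p_split: "p * (1 / q + (1 / p - 1 / q)) = 1"
    using exps by auto
  have "1 / p < 1" "1 / r < 1" "1 / q > 0" "1 / q = 1 / p + 1 / r - 1"
    using exps by auto
  then have exps_pos: "1 / q > 0" "1 / r - 1 / q > 0" "1 / p - 1 / q > 0"
    by linarith+
  have "k (x - y) * g y = (k (x - y) powr r * g y powr p) powr (1 / q)
      * (k (x - y) powr r) powr (1 / r - 1 / q) * (g y powr p) powr (1 / p - 1 / q)" for y
    using powr_powr_split[OF nn(1) r_split, of "x - y"] powr_powr_split[OF nn(2) p_split, of y]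
    by (simp add: powr_mult mult_ac)
  then have "(\<integral>\<^sup>+y. ennreal (k (x - y) * g y) \<partial>lborel)
      = (\<integral>\<^sup>+y. ennreal ((k (x - y) powr r * g y powr p) powr (1 / q)
          * (k (x - y) powr r) powr (1 / r - 1 / q) * (g y powr p) powr (1 / p - 1 / q)) \<partial>lborel)"
    by simp
  also have "\<dots> \<le> ennreal (H powr (1 / q) * KR powr (1 / r - 1 / q) * GP powr (1 / p - 1 / q))"
  proof (rule nn_integral_Holder3[OF _ _ _ _ _ _ exps_pos _ Ix _ _ Ig])
    show "(\<integral>\<^sup>+y. ennreal (k (x - y) powr r) \<partial>lborel) = ennreal KR"
      using nn_integral_lborel_reflect[of "\<lambda>z. ennreal (k z powr r)" x] Ik by simp
  qed (use Ik Ig Ix exps(4) in auto)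
  finally show ?thesis .
qed

lemma Young_convolution_inequality_nn:
  fixes k g :: "'a::euclidean_space \<Rightarrow> real"
  assumes [measurable]: "k \<in> borel_measurable borel" "g \<in> borel_measurable borel"
    and nn: "\<And>z. k z \<ge> 0" "\<And>z. g z \<ge> 0"
    and exps: "p > 1" "r > 1" "q > 0" "1 / p + 1 / r = 1 + 1 / q"
    and Ik: "(\<integral>\<^sup>+z. ennreal (k z powr r) \<partial>lborel) = ennreal KR" "KR \<ge> 0"
    and Ig: "(\<integral>\<^sup>+y. ennreal (g y powr p) \<partial>lborel) = ennreal GP" "GP \<ge> 0"
  shows "AE x in lborel. (\<integral>\<^sup>+y. ennreal (k (x - y) * g y) \<partial>lborel) < \<infinity>"
    and "(\<integral>\<^sup>+x. ennreal (enn2real (\<integral>\<^sup>+y. ennreal (k (x - y) * g y) \<partial>lborel) powr q) \<partial>lborel)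
           \<le> ennreal (KR powr (q / r) * GP powr (q / p))"
proof -
  define h where "h x = (\<integral>\<^sup>+y. ennreal (k (x - y) * g y) \<partial>lborel)" for x
  define H where "H x = (\<integral>\<^sup>+y. ennreal (k (x - y) powr r * g y powr p) \<partial>lborel)" for x
  define c where "c = KR powr (1 / r - 1 / q) * GP powr (1 / p - 1 / q)"
  have [measurable]: "H \<in> borel_measurable lborel"
    unfolding H_def by measurable
  have "(\<integral>\<^sup>+x. H x \<partial>lborel) = ennreal KR * ennreal GP"
    using nn_integral_convolution[of "\<lambda>z. ennreal (k z powr r)" "\<lambda>y. ennreal (g y powr p)"] Ik Ig
    by (simp add: H_def ennreal_mult)
  then have H_integral: "(\<integral>\<^sup>+x. H x \<partial>lborel) = ennreal (KR * GP)"
    using Ik Ig by (simp add: ennreal_mult)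
  then have H_finite: "AE x in lborel. H x \<noteq> \<infinity>"
    by (intro nn_integral_PInf_AE) auto
  have h_le: "h x \<le> ennreal (enn2real (H x) powr (1 / q) * c)" if "H x \<noteq> \<infinity>" for x
    using nn_integral_convolution_le_Holder[OF assms(1-12), of x "enn2real (H x)"] that
    by (simp add: h_def H_def c_def less_top mult.assoc)
  show "AE x in lborel. h x < \<infinity>" unfolding h_def[symmetric]
    using H_finite
  proof eventually_elim
    case (elim x)
    show ?case
      using h_le[OF elim] by (rule order.strict_trans1) simp
  qed
  have h_powr_le: "ennreal (enn2real (h x) powr q) \<le> H x * ennreal (c powr q)" if "H x \<noteq> \<infinity>" for x
  proof -
    have "enn2real (h x) powr q \<le> (enn2real (H x) powr (1 / q) * c) powr q"
      using h_le[OF that] exps by (intro powr_mono2 enn2real_leI) (auto simp: c_def)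
    also have "\<dots> = enn2real (H x) * c powr q"
      using exps by (simp add: powr_mult powr_powr c_def)
    finally have "ennreal (enn2real (h x) powr q) \<le> ennreal (enn2real (H x) * c powr q)"
      by (rule ennreal_leI)
    also have "\<dots> = H x * ennreal (c powr q)"
      using that by (simp add: ennreal_mult' less_top)
    finally show ?thesis .
  qed
  have "(\<integral>\<^sup>+x. ennreal (enn2real (h x) powr q) \<partial>lborel) \<le> (\<integral>\<^sup>+x. H x * ennreal (c powr q) \<partial>lborel)"
    using H_finite by (intro nn_integral_mono_AE) (auto elim!: eventually_mono intro: h_powr_le)
  also have "\<dots> = ennreal (KR * GP * c powr q)"
    using H_integral Ik Ig by (simp add: nn_integral_multc ennreal_mult')
  also have "KR * GP * c powr q
      = (KR * (KR powr (1 / r - 1 / q)) powr q) * (GP * (GP powr (1 / p - 1 / q)) powr q)"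
    by (simp add: c_def powr_mult mult_ac)
  also have "\<dots> = KR powr (q / r) * GP powr (q / p)"
    using Ik(2) Ig(2) exps by (simp add: mult_powr_powr_eq)
  finally show "(\<integral>\<^sup>+x. ennreal (enn2real (h x) powr q) \<partial>lborel) \<le> ennreal (KR powr (q / r) * GP powr (q / p))" .
qed

lemma nn_integral_add_square_powr_finite:
  fixes c e :: real
  assumes c: "c > 0" and e: "e > 1 / 2"
  shows "(\<integral>\<^sup>+x. ennreal ((c + x\<^sup>2) powr (- e)) \<partial>lborel) < \<infinity>"
proof -
  define F :: "real \<Rightarrow> ennreal" where "F z = ennreal (indicator {1..} z * z powr (- 2 * e))" for z
  have [measurable]: "F \<in> borel_measurable borel"
    unfolding F_def by measurable
  have "((\<lambda>x. x powr (- 2 * e)) has_integral - (1 powr (- 2 * e + 1)) / (- 2 * e + 1)) {1..}"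
    by (rule has_integral_powr_to_inf) (use e in auto)
  then have F_finite: "(\<integral>\<^sup>+z. F z \<partial>lborel) < \<infinity>"
    unfolding F_def by (subst nn_integral_has_integral_lebesgue) auto
  have bound: "ennreal ((c + x\<^sup>2) powr (- e))
      \<le> ennreal (c powr (- e)) * indicator {-1..1} x + F x + F (- x)" for x
  proof (cases "\<bar>x\<bar> \<le> 1")
    case True
    then have "ennreal ((c + x\<^sup>2) powr (- e)) \<le> ennreal (c powr (- e)) * indicator {-1..1} x"
      using c e by (auto simp: indicator_def intro!: ennreal_leI powr_mono2')
    then show ?thesis
      by (simp add: add.assoc add_increasing2)
  next
    case False
    have "(c + x\<^sup>2) powr (- e) \<le> (x\<^sup>2) powr (- e)"
      using c e False by (intro powr_mono2') auto
    also have "\<dots> = \<bar>x\<bar> powr (- 2 * e)"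
      using powr_powr[of "\<bar>x\<bar>" 2 "- e"] by simp
    finally have tail: "ennreal ((c + x\<^sup>2) powr (- e)) \<le> F \<bar>x\<bar>"
      using False by (simp add: F_def ennreal_leI)
    then show ?thesis
      by (cases "x \<ge> 0") (simp_all add: add_increasing add_increasing2)
  qed
  have "(\<integral>\<^sup>+x. ennreal ((c + x\<^sup>2) powr (- e)) \<partial>lborel)
      \<le> (\<integral>\<^sup>+x. ennreal (c powr (- e)) * indicator {-1..1} x + F x + F (- x) \<partial>lborel)"
    by (intro nn_integral_mono bound)
  also have "\<dots> = ennreal (c powr (- e)) * emeasure lborel {-1..1::real}
      + (\<integral>\<^sup>+z. F z \<partial>lborel) + (\<integral>\<^sup>+z. F (- z) \<partial>lborel)"
    by (simp add: nn_integral_add nn_integral_cmult_indicator)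
  also have "\<dots> < \<infinity>"
    using F_finite nn_integral_lborel_reflect[of F 0] by (simp add: ennreal_mult_less_top)
  finally show ?thesis .
qed

lemma nn_integral_add_norm_square_powr_finite:
  fixes c \<gamma> :: real
  assumes c: "c > 0" and \<gamma>: "\<gamma> > real DIM('a::euclidean_space)"
  shows "(\<integral>\<^sup>+w. ennreal ((c + (norm (w::'a))\<^sup>2) powr (- \<gamma> / 2)) \<partial>lborel) < \<infinity>"
proof -
  define e where "e = \<gamma> / (2 * DIM('a))"
  have e: "e > 1 / 2"
    using \<gamma> by (simp add: e_def field_simps)
  \<comment> \<open>each coordinate is dominated by the norm, so the radial weight is dominated by a product
    of one-dimensional weights\<close>
  have bound: "(c + (norm w)\<^sup>2) powr (- \<gamma> / 2) \<le> (\<Prod>b\<in>Basis. (c + (w \<bullet> b)\<^sup>2) powr (- e))" for w :: 'a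
  proof -
    have "c + (norm w)\<^sup>2 > 0"
      using c by (simp add: add_pos_nonneg)
    then have "(c + (norm w)\<^sup>2) powr (- \<gamma> / 2) = (\<Prod>b\<in>(Basis::'a set). (c + (norm w)\<^sup>2) powr (- e))"
      by (simp add: e_def powr_power)
    also have "\<dots> \<le> (\<Prod>b\<in>Basis. (c + (w \<bullet> b)\<^sup>2) powr (- e))"
    proof (rule prod_mono)
      fix b :: 'a
      assume "b \<in> Basis"
      then have "(w \<bullet> b)\<^sup>2 \<le> (norm w)\<^sup>2"
        by (metis Basis_le_norm abs_ge_zero power2_abs power_mono)
      then show "0 \<le> (c + (norm w)\<^sup>2) powr (- e) \<and> (c + (norm w)\<^sup>2) powr (- e) \<le> (c + (w \<bullet> b)\<^sup>2) powr (- e)"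
        using c e by (auto intro!: powr_mono2' add_pos_nonneg)
    qed
    finally show ?thesis .
  qed
  have "(\<integral>\<^sup>+w. ennreal ((c + (norm (w::'a))\<^sup>2) powr (- \<gamma> / 2)) \<partial>lborel)
      \<le> (\<integral>\<^sup>+w. (\<Prod>b\<in>Basis. ennreal ((c + ((w::'a) \<bullet> b)\<^sup>2) powr (- e))) \<partial>lborel)"
    using bound by (intro nn_integral_mono) (auto simp: prod_ennreal intro!: ennreal_leI)
  also have "\<dots> = (\<Prod>b\<in>(Basis::'a set). (\<integral>\<^sup>+x. ennreal ((c + x\<^sup>2) powr (- e)) \<partial>lborel))"
    by (rule nn_integral_lborel_prod) auto
  also have "\<dots> < \<infinity>"
    using nn_integral_add_square_powr_finite[OF c e] by (simp add: power_less_top_ennreal)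
  finally show ?thesis .
qed

definition E_kernel :: "real \<Rightarrow> real \<Rightarrow> real \<Rightarrow> 'a::euclidean_space \<Rightarrow> real" where
  "E_kernel \<beta> s t z = t powr \<beta> / (t\<^sup>2 + (norm z)\<^sup>2) powr s"

lemma E_kernel_nonneg: "E_kernel \<beta> s t z \<ge> 0"
  by (simp add: E_kernel_def)

lemma borel_measurable_E_kernel [measurable]: "E_kernel \<beta> s t \<in> borel_measurable borel"
  unfolding E_kernel_def by measurable

lemma E_op_eq_convolution:
  "E_op \<alpha> \<beta> u x t = (\<integral>y. u y * E_kernel \<beta> ((real DIM('a) + 1 - \<alpha>) / 2) t (x - y) \<partial>lebesgue)"
  for u :: "'a::euclidean_space \<Rightarrow> real"
  by (simp add: E_op_def E_kernel_def mult.commute)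

lemma E_kernel_scale:
  assumes t: "t > 0"
  shows "E_kernel \<beta> s t (t *\<^sub>R w) = t powr (\<beta> - 2 * s) * E_kernel \<beta> s 1 w"
proof -
  have Y: "1 + (norm w)\<^sup>2 > 0"
    by (simp add: add_pos_nonneg)
  have "t\<^sup>2 + (norm (t *\<^sub>R w))\<^sup>2 = t\<^sup>2 * (1 + (norm w)\<^sup>2)"
    using t by (simp add: power_mult_distrib algebra_simps)
  moreover have "(t\<^sup>2) powr s = t powr (2 * s)"
    using t powr_powr[of t 2 s] by simp
  ultimately show ?thesis
    using t Y by (simp add: E_kernel_def powr_mult powr_diff)
qed

lemma nn_integral_E_kernel_powr_finite:
  assumes "t > 0" "r > 0" "2 * s * r > real DIM('a::euclidean_space)"
  shows "(\<integral>\<^sup>+z. ennreal (E_kernel \<beta> s t (z::'a) powr r) \<partial>lborel) < \<infinity>"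
proof -
  have "E_kernel \<beta> s t z powr r = t powr (\<beta> * r) * (t\<^sup>2 + (norm z)\<^sup>2) powr (- (2 * s * r) / 2)"
    for z :: 'a
    by (simp add: E_kernel_def powr_divide powr_powr powr_minus_divide)
  then have "(\<integral>\<^sup>+z. ennreal (E_kernel \<beta> s t (z::'a) powr r) \<partial>lborel)
      = ennreal (t powr (\<beta> * r)) * (\<integral>\<^sup>+z. ennreal ((t\<^sup>2 + (norm (z::'a))\<^sup>2) powr (- (2 * s * r) / 2)) \<partial>lborel)"
    by (simp add: ennreal_mult nn_integral_cmult)
  also have "\<dots> < \<infinity>"
    using nn_integral_add_norm_square_powr_finite[of "t\<^sup>2" "2 * s * r", where 'a='a] assms
    by (simp add: ennreal_mult_less_top)
  finally show ?thesis .
qed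

lemma nn_integral_weighted_E_kernel_powr_finite:
  assumes "r > 0" "\<theta> \<ge> 0" "(2 * s - \<theta>) * r > real DIM('a::euclidean_space)"
  shows "(\<integral>\<^sup>+w. ennreal ((norm (w::'a) powr \<theta> * E_kernel \<beta> s 1 w) powr r) \<partial>lborel) < \<infinity>"
proof -
  have "(norm w powr \<theta> * E_kernel \<beta> s 1 w) powr r \<le> (1 + (norm w)\<^sup>2) powr (- ((2 * s - \<theta>) * r) / 2)"
    for w :: 'a
  proof -
    define Y where "Y = 1 + (norm w)\<^sup>2"
    have Y: "Y > 0"
      by (simp add: Y_def add_pos_nonneg)
    have "norm w powr \<theta> = ((norm w)\<^sup>2) powr (\<theta> / 2)"
      using powr_powr[of "norm w" 2 "\<theta> / 2"] by simp
    also have "\<dots> \<le> Y powr (\<theta> / 2)"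
      unfolding Y_def using assms by (intro powr_mono2) auto
    finally have "norm w powr \<theta> * E_kernel \<beta> s 1 w \<le> Y powr (\<theta> / 2) / Y powr s"
      by (simp add: E_kernel_def Y_def divide_right_mono)
    then have "(norm w powr \<theta> * E_kernel \<beta> s 1 w) powr r \<le> (Y powr (\<theta> / 2) / Y powr s) powr r"
      using assms by (intro powr_mono2) (auto simp: E_kernel_nonneg)
    also have "\<dots> = Y powr ((\<theta> / 2 - s) * r)"
      using Y by (simp add: powr_diff[symmetric] powr_powr)
    also have "(\<theta> / 2 - s) * r = - ((2 * s - \<theta>) * r) / 2"
      by (simp add: algebra_simps)
    finally show ?thesis
      by (simp add: Y_def)
  qed
  then have "(\<integral>\<^sup>+w. ennreal ((norm (w::'a) powr \<theta> * E_kernel \<beta> s 1 w) powr r) \<partial>lborel)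
     \<le> (\<integral>\<^sup>+w. ennreal ((1 + (norm (w::'a))\<^sup>2) powr (- ((2 * s - \<theta>) * r) / 2)) \<partial>lborel)"
    by (intro nn_integral_mono ennreal_leI)
  also have "\<dots> < \<infinity>"
    using nn_integral_add_norm_square_powr_finite[of 1 "(2 * s - \<theta>) * r", where 'a='a] assms by simp
  finally show ?thesis .
qed

lemma nn_integral_weighted_E_kernel_powr_scale:
  assumes t: "t > 0"
  shows "(\<integral>\<^sup>+z. ennreal ((norm (z::'a::euclidean_space) powr \<theta> * E_kernel \<beta> s t z) powr r) \<partial>lborel)
       = ennreal (t powr (real DIM('a) + r * (\<theta> + \<beta> - 2 * s)))
         * (\<integral>\<^sup>+w. ennreal ((norm (w::'a) powr \<theta> * E_kernel \<beta> s 1 w) powr r) \<partial>lborel)"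
proof -
  have scaled: "(norm (t *\<^sub>R w) powr \<theta> * E_kernel \<beta> s t (t *\<^sub>R w)) powr r
      = t powr (r * (\<theta> + \<beta> - 2 * s)) * (norm w powr \<theta> * E_kernel \<beta> s 1 w) powr r" for w :: 'a
  proof -
    have "norm (t *\<^sub>R w) powr \<theta> = t powr \<theta> * norm w powr \<theta>"
      using t by (simp add: powr_mult)
    moreover have "t powr (\<theta> + \<beta> - 2 * s) = t powr \<theta> * t powr (\<beta> - 2 * s)"
      by (simp add: add_diff_eq[symmetric] powr_add)
    ultimately have eq: "norm (t *\<^sub>R w) powr \<theta> * E_kernel \<beta> s t (t *\<^sub>R w)
        = t powr (\<theta> + \<beta> - 2 * s) * (norm w powr \<theta> * E_kernel \<beta> s 1 w)"
      using t by (simp add: E_kernel_scale mult_ac)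
    show ?thesis
      unfolding eq by (subst powr_mult) (auto simp: E_kernel_nonneg powr_powr mult.commute)
  qed
  have "(\<integral>\<^sup>+z. ennreal ((norm (z::'a) powr \<theta> * E_kernel \<beta> s t z) powr r) \<partial>lborel)
      = ennreal (t ^ DIM('a)) * (\<integral>\<^sup>+w. ennreal ((norm (t *\<^sub>R (w::'a)) powr \<theta> * E_kernel \<beta> s t (t *\<^sub>R w)) powr r) \<partial>lborel)"
    using nn_integral_lborel_affine[of "\<lambda>z::'a. ennreal ((norm z powr \<theta> * E_kernel \<beta> s t z) powr r)" t 0] t
    by simp
  also have "\<dots> = ennreal (t ^ DIM('a)) * ennreal (t powr (r * (\<theta> + \<beta> - 2 * s)))
      * (\<integral>\<^sup>+w. ennreal ((norm (w::'a) powr \<theta> * E_kernel \<beta> s 1 w) powr r) \<partial>lborel)"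
    unfolding scaled by (simp add: ennreal_mult nn_integral_cmult mult.assoc)
  also have "ennreal (t ^ DIM('a)) * ennreal (t powr (r * (\<theta> + \<beta> - 2 * s)))
      = ennreal (t powr (real DIM('a) + r * (\<theta> + \<beta> - 2 * s)))"
    using t by (simp add: ennreal_mult'[symmetric] powr_add powr_realpow)
  finally show ?thesis .
qed

lemma bounded_range_if_compact_support:
  fixes \<psi> :: "'a::topological_space \<Rightarrow> 'b::real_normed_vector"
  assumes "continuous_on UNIV \<psi>" "compact K" "\<And>x. x \<notin> K \<Longrightarrow> \<psi> x = 0"
  shows "bounded (range \<psi>)"
proof -
  have "bounded (\<psi> ` K)"
    using assms by (intro compact_imp_bounded compact_continuous_image) (auto intro: continuous_on_subset)
  moreover have "range \<psi> \<subseteq> insert 0 (\<psi> ` K)"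
    using assms(3) by auto
  ultimately show ?thesis
    by (metis bounded_insert bounded_subset)
qed

lemma has_derivative_vanishing_on_open:
  assumes "(f has_derivative f') (at x)" "open S" "x \<in> S" "\<And>y. y \<in> S \<Longrightarrow> f y = 0"
  shows "f' = (\<lambda>_. 0)"
proof -
  have "((\<lambda>_. 0) has_derivative f') (at x)"
    using has_derivative_transform_within_open[of f f' x UNIV S "\<lambda>_. 0"] assms by auto
  then show ?thesis
    using has_derivative_const has_derivative_unique by blast
qed

lemma Holder_bound_if_bounded_Lipschitz:
  fixes \<phi> :: "'a::real_normed_vector \<Rightarrow> real"
  assumes \<theta>: "0 < \<theta>" "\<theta> \<le> 1"
    and bound: "\<And>x. \<bar>\<phi> x\<bar> \<le> A" and Lipschitz: "\<And>x y. \<bar>\<phi> x - \<phi> y\<bar> \<le> B * norm (x - y)" and "B \<ge> 0"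
  shows "\<bar>\<phi> x - \<phi> y\<bar> \<le> 2 * (A + B) * norm (x - y) powr \<theta>"
proof -
  have "A \<ge> 0"
    using bound[of x] by linarith
  show ?thesis
  proof (cases "norm (x - y) \<le> 1")
    case True
    have "norm (x - y) \<le> norm (x - y) powr \<theta>"
    proof (cases "x = y")
      case False
      then have "norm (x - y) powr 1 \<le> norm (x - y) powr \<theta>"
        using True \<theta> by (intro powr_mono') auto
      then show ?thesis
        using False by simp
    qed simp
    then have "B * norm (x - y) \<le> 2 * (A + B) * norm (x - y) powr \<theta>"
      using \<open>A \<ge> 0\<close> \<open>B \<ge> 0\<close> by (intro mult_mono) auto
    then show ?thesis
      using Lipschitz[of x y] by linarith
  next
    case False
    then have "1 \<le> norm (x - y) powr \<theta>"
      using \<theta> by (intro ge_one_powr_ge_zero) auto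
    moreover have "\<bar>\<phi> x - \<phi> y\<bar> \<le> 2 * (A + B)"
      using abs_triangle_ineq4[of "\<phi> x" "\<phi> y"] bound[of x] bound[of y] \<open>B \<ge> 0\<close> by (smt (verit))
    ultimately show ?thesis
      using \<open>A \<ge> 0\<close> \<open>B \<ge> 0\<close> by (smt (verit) mult_le_cancel_left1)
  qed
qed

lemma C1_compact_support_Holder:
  fixes \<phi> :: "'a::euclidean_space \<Rightarrow> real" and \<phi>' :: "'a \<Rightarrow> ('a \<Rightarrow>\<^sub>L real)"
  assumes deriv: "\<forall>x. (\<phi> has_derivative blinfun_apply (\<phi>' x)) (at x)"
    and cont: "continuous_on UNIV \<phi>'" and supp: "has_compact_support \<phi>"
    and \<theta>: "0 < \<theta>" "\<theta> \<le> 1"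
  shows "\<phi> \<in> borel_measurable borel" and "bounded (range \<phi>)" and "C1_norm \<phi> \<phi>' \<ge> 0"
    and "\<bar>\<phi> x - \<phi> y\<bar> \<le> 2 * C1_norm \<phi> \<phi>' * norm (x - y) powr \<theta>"
proof -
  obtain K where K: "compact K" "\<And>x. x \<notin> K \<Longrightarrow> \<phi> x = 0"
    using supp unfolding has_compact_support_def by blast
  have "continuous_on UNIV \<phi>"
    using deriv by (intro continuous_at_imp_continuous_on) (auto intro: has_derivative_continuous)
  then show "\<phi> \<in> borel_measurable borel" and \<phi>_bounded: "bounded (range \<phi>)"
    using K by (auto intro: borel_measurable_continuous_onI bounded_range_if_compact_support)
  have "\<phi>' x = 0" if "x \<notin> K" for x
  proof -
    have "blinfun_apply (\<phi>' x) = (\<lambda>_. 0)"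
      using deriv K that by (intro has_derivative_vanishing_on_open[of \<phi> _ x "- K"])
        (auto simp: compact_imp_closed open_Compl)
    then show ?thesis
      by (intro blinfun_eqI) simp
  qed
  then have "bounded (range \<phi>')"
    using cont K by (intro bounded_range_if_compact_support)
  then have \<phi>'_bound: "norm (\<phi>' x) \<le> (SUP x. norm (\<phi>' x))" for x
    by (rule bounded_norm_le_SUP_norm)
  have Lipschitz: "\<bar>\<phi> x - \<phi> y\<bar> \<le> (SUP x. norm (\<phi>' x)) * norm (x - y)" for x y
    using differentiable_bound[of UNIV \<phi> "\<lambda>x. blinfun_apply (\<phi>' x)" "SUP x. norm (\<phi>' x)" x y]
      deriv \<phi>'_bound by (simp add: norm_blinfun.rep_eq)
  have \<phi>_bound: "\<bar>\<phi> x\<bar> \<le> (SUP x. \<bar>\<phi> x\<bar>)" for x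
    using bounded_norm_le_SUP_norm[OF \<phi>_bounded] by simp
  have "(SUP x. norm (\<phi>' x)) \<ge> 0"
    using \<phi>'_bound[of x] norm_ge_zero[of "\<phi>' x"] by linarith
  moreover have "(SUP x. \<bar>\<phi> x\<bar>) \<ge> 0"
    using \<phi>_bound[of x] abs_ge_zero[of "\<phi> x"] by linarith
  ultimately show "C1_norm \<phi> \<phi>' \<ge> 0"
    unfolding C1_norm_def by simp
  from \<open>(SUP x. norm (\<phi>' x)) \<ge> 0\<close> show "\<bar>\<phi> x - \<phi> y\<bar> \<le> 2 * C1_norm \<phi> \<phi>' * norm (x - y) powr \<theta>"
    unfolding C1_norm_def by (rule Holder_bound_if_bounded_Lipschitz[OF \<theta> \<phi>_bound Lipschitz])
qed

lemma Lp_bound_if_AE_le: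
  fixes F H :: "'a::euclidean_space \<Rightarrow> real"
  assumes [measurable]: "F \<in> borel_measurable borel" "H \<in> borel_measurable borel"
    and le: "AE x in lborel. \<bar>F x\<bar> \<le> c * H x" and "\<And>x. H x \<ge> 0" "c \<ge> 0" "q > 0"
    and H_Lq: "(\<integral>\<^sup>+x. ennreal (H x powr q) \<partial>lborel) \<le> ennreal M" "M \<ge> 0"
  shows "in_Lp q F" and "Lp_norm q F \<le> c * M powr (1 / q)"
proof -
  have "(\<integral>\<^sup>+x. ennreal (\<bar>F x\<bar> powr q) \<partial>lebesgue) = (\<integral>\<^sup>+x. ennreal (\<bar>F x\<bar> powr q) \<partial>lborel)"
    by (rule nn_integral_completion)
  also have "\<dots> \<le> (\<integral>\<^sup>+x. ennreal (c powr q) * ennreal (H x powr q) \<partial>lborel)"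
    using le
  proof (intro nn_integral_mono_AE, elim eventually_mono)
    fix x
    assume "\<bar>F x\<bar> \<le> c * H x"
    then have "\<bar>F x\<bar> powr q \<le> c powr q * H x powr q"
      using assms by (auto simp: powr_mult[symmetric] intro: powr_mono2)
    then show "ennreal (\<bar>F x\<bar> powr q) \<le> ennreal (c powr q) * ennreal (H x powr q)"
      by (simp add: ennreal_mult'[symmetric] ennreal_leI)
  qed
  also have "\<dots> \<le> ennreal (c powr q) * ennreal M"
    using H_Lq by (simp add: nn_integral_cmult mult_left_mono)
  finally have F_Lq: "(\<integral>\<^sup>+x. ennreal (\<bar>F x\<bar> powr q) \<partial>lebesgue) \<le> ennreal (c powr q * M)"
    by (simp add: ennreal_mult')
  have "F \<in> borel_measurable lebesgue"
    by (rule measurable_completion) simp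
  then show "in_Lp q F"
    unfolding in_Lp_def using F_Lq by (simp add: le_less_trans)
  have "Lp_norm q F \<le> (c powr q * M) powr (1 / q)"
    unfolding Lp_norm_def using F_Lq assms by (intro powr_mono2 enn2real_leI) auto
  also have "\<dots> = c * M powr (1 / q)"
    using assms by (simp add: powr_mult powr_powr)
  finally show "Lp_norm q F \<le> c * M powr (1 / q)" .
qed

lemma in_Lp_borel_representative:
  fixes f :: "'a::euclidean_space \<Rightarrow> real"
  assumes "in_Lp p f"
  obtains g N where "g \<in> borel_measurable borel" "AE x in lborel. f x = g x"
    and "(\<integral>\<^sup>+x. ennreal (\<bar>g x\<bar> powr p) \<partial>lborel) = ennreal N" "N \<ge> 0" "Lp_norm p f = N powr (1 / p)"
proof -
  obtain g where g: "g \<in> borel_measurable lborel" "AE x in lborel. f x = g x"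
    using assms completion_ex_borel_measurable_real unfolding in_Lp_def by blast
  then have "(\<integral>\<^sup>+x. ennreal (\<bar>f x\<bar> powr p) \<partial>lebesgue) = (\<integral>\<^sup>+x. ennreal (\<bar>g x\<bar> powr p) \<partial>lborel)"
    unfolding nn_integral_completion by (intro nn_integral_cong_AE) (auto elim!: eventually_mono)
  moreover have "(\<integral>\<^sup>+x. ennreal (\<bar>f x\<bar> powr p) \<partial>lebesgue) < \<infinity>"
    using assms unfolding in_Lp_def by simp
  ultimately show ?thesis
    using g by (intro that[of g "enn2real (\<integral>\<^sup>+x. ennreal (\<bar>g x\<bar> powr p) \<partial>lborel)"])
      (auto simp: Lp_norm_def less_top)
qed

lemma lebesgue_integral_mult_eq_lborel_AE:
  fixes u v w :: "'a::euclidean_space \<Rightarrow> real"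
  assumes "u \<in> borel_measurable lebesgue" "v \<in> borel_measurable borel" "w \<in> borel_measurable borel"
    and "AE x in lborel. u x = v x"
  shows "(\<integral>x. u x * w x \<partial>lebesgue) = (\<integral>x. v x * w x \<partial>lborel)"
proof -
  have "v \<in> borel_measurable lebesgue" "w \<in> borel_measurable lebesgue"
    using assms(2,3) by (auto intro: measurable_completion)
  then have "(\<integral>x. u x * w x \<partial>lebesgue) = (\<integral>x. v x * w x \<partial>lebesgue)"
    using assms(1) AE_completion[OF assms(4)] by (intro integral_cong_AE) (auto elim!: eventually_mono)
  also have "\<dots> = (\<integral>x. v x * w x \<partial>lborel)"
    using assms(2,3) by (intro integral_completion) simp
  finally show ?thesis .
qed

lemma commutator_le_weighted_convolution:
  fixes K \<phi> g :: "'a::euclidean_space \<Rightarrow> real"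
  assumes [measurable]: "K \<in> borel_measurable borel" "\<phi> \<in> borel_measurable borel" "g \<in> borel_measurable borel"
    and K_nonneg: "\<And>z. K z \<ge> 0" and \<phi>_bounded: "bounded (range \<phi>)"
    and Holder: "\<And>y. \<bar>\<phi> x - \<phi> y\<bar> \<le> L * norm (x - y) powr \<theta>" and "L \<ge> 0"
    and finite: "(\<integral>\<^sup>+y. ennreal (K (x - y) * \<bar>g y\<bar>) \<partial>lborel) < \<infinity>"
      "(\<integral>\<^sup>+y. ennreal (norm (x - y) powr \<theta> * K (x - y) * \<bar>g y\<bar>) \<partial>lborel) < \<infinity>"
  shows "\<bar>\<phi> x * (\<integral>y. g y * K (x - y) \<partial>lborel) - (\<integral>y. \<phi> y * g y * K (x - y) \<partial>lborel)\<bar>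
         \<le> L * enn2real (\<integral>\<^sup>+y. ennreal (norm (x - y) powr \<theta> * K (x - y) * \<bar>g y\<bar>) \<partial>lborel)"
proof -
  obtain A where A: "\<And>y. \<bar>\<phi> y\<bar> \<le> A"
    using \<phi>_bounded unfolding bounded_real by auto
  have gK: "integrable lborel (\<lambda>y. g y * K (x - y))"
  proof (rule integrableI_bounded)
    show "(\<integral>\<^sup>+y. ennreal (norm (g y * K (x - y))) \<partial>lborel) < \<infinity>"
      using finite(1) K_nonneg by (simp add: abs_mult mult.commute)
  qed measurable
  have "integrable lborel (\<lambda>y. A * (g y * K (x - y)))"
    using gK by (rule integrable_mult_right)
  then have \<phi>gK: "integrable lborel (\<lambda>y. \<phi> y * g y * K (x - y))"
  proof (rule Bochner_Integration.integrable_bound)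
    show "AE y in lborel. norm (\<phi> y * g y * K (x - y)) \<le> norm (A * (g y * K (x - y)))"
    proof (rule AE_I2)
      fix y
      have "\<bar>\<phi> y\<bar> * (\<bar>g y\<bar> * K (x - y)) \<le> \<bar>A\<bar> * (\<bar>g y\<bar> * K (x - y))"
        using A[of y] K_nonneg by (intro mult_right_mono) auto
      then show "norm (\<phi> y * g y * K (x - y)) \<le> norm (A * (g y * K (x - y)))"
        using K_nonneg by (simp add: abs_mult mult.assoc)
    qed
  qed measurable
  have diffK: "integrable lborel (\<lambda>y. (\<phi> x - \<phi> y) * g y * K (x - y))"
    using Bochner_Integration.integrable_diff[OF integrable_mult_right[OF gK, of "\<phi> x"] \<phi>gK]
    by (simp add: left_diff_distrib mult.assoc)
  have "\<phi> x * (\<integral>y. g y * K (x - y) \<partial>lborel) - (\<integral>y. \<phi> y * g y * K (x - y) \<partial>lborel)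
      = (\<integral>y. (\<phi> x - \<phi> y) * g y * K (x - y) \<partial>lborel)"
    using gK \<phi>gK by (simp add: left_diff_distrib mult.assoc)
  also have "ennreal \<bar>\<dots>\<bar> \<le> (\<integral>\<^sup>+y. ennreal (norm ((\<phi> x - \<phi> y) * g y * K (x - y))) \<partial>lborel)"
    using integral_norm_bound_ennreal[OF diffK] by simp
  also have "\<dots> \<le> (\<integral>\<^sup>+y. ennreal L * ennreal (norm (x - y) powr \<theta> * K (x - y) * \<bar>g y\<bar>) \<partial>lborel)"
  proof (rule nn_integral_mono)
    fix y
    have "norm ((\<phi> x - \<phi> y) * g y * K (x - y)) = \<bar>\<phi> x - \<phi> y\<bar> * (K (x - y) * \<bar>g y\<bar>)"
      using K_nonneg by (simp add: abs_mult)
    also have "\<dots> \<le> L * (norm (x - y) powr \<theta> * K (x - y) * \<bar>g y\<bar>)"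
      using mult_right_mono[OF Holder[of y], of "K (x - y) * \<bar>g y\<bar>"] K_nonneg by (simp add: mult.assoc)
    finally show "ennreal (norm ((\<phi> x - \<phi> y) * g y * K (x - y)))
        \<le> ennreal L * ennreal (norm (x - y) powr \<theta> * K (x - y) * \<bar>g y\<bar>)"
      using \<open>L \<ge> 0\<close> by (simp add: ennreal_mult'[symmetric] ennreal_leI)
  qed
  also have "\<dots> = ennreal (L * enn2real (\<integral>\<^sup>+y. ennreal (norm (x - y) powr \<theta> * K (x - y) * \<bar>g y\<bar>) \<partial>lborel))"
    using finite(2) \<open>L \<ge> 0\<close> by (simp add: nn_integral_cmult ennreal_mult less_top)
  finally show ?thesis
    using \<open>L \<ge> 0\<close> by (simp add: ennreal_le_iff)
qed

lemma convolution_commutator_Lp_bound_borel: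
  fixes K \<phi> g :: "'a::euclidean_space \<Rightarrow> real"
  assumes [measurable]: "K \<in> borel_measurable borel" "\<phi> \<in> borel_measurable borel" "g \<in> borel_measurable borel"
    and K_nonneg: "\<And>z. K z \<ge> 0"
    and exps: "p > 1" "r > 1" "q > 0" "1 / p + 1 / r = 1 + 1 / q"
    and K_Lr: "(\<integral>\<^sup>+z. ennreal (K z powr r) \<partial>lborel) < \<infinity>"
    and weighted_K_Lr: "(\<integral>\<^sup>+z. ennreal ((norm z powr \<theta> * K z) powr r) \<partial>lborel) = ennreal W" "W \<ge> 0"
    and \<phi>_bounded: "bounded (range \<phi>)"
    and Holder: "\<And>x y. \<bar>\<phi> x - \<phi> y\<bar> \<le> L * norm (x - y) powr \<theta>" "L \<ge> 0"
    and g_Lp: "(\<integral>\<^sup>+x. ennreal (\<bar>g x\<bar> powr p) \<partial>lborel) = ennreal N" "N \<ge> 0"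
  defines "Comm \<equiv> \<lambda>x. \<phi> x * (\<integral>y. g y * K (x - y) \<partial>lborel) - (\<integral>y. \<phi> y * g y * K (x - y) \<partial>lborel)"
  shows "in_Lp q Comm" and "Lp_norm q Comm \<le> L * W powr (1 / r) * N powr (1 / p)"
proof -
  define h where "h x = (\<integral>\<^sup>+y. ennreal (K (x - y) * \<bar>g y\<bar>) \<partial>lborel)" for x
  define h\<theta> where "h\<theta> x = (\<integral>\<^sup>+y. ennreal (norm (x - y) powr \<theta> * K (x - y) * \<bar>g y\<bar>) \<partial>lborel)"
    for x
  have "(\<integral>\<^sup>+z. ennreal (K z powr r) \<partial>lborel)
      = ennreal (enn2real (\<integral>\<^sup>+z. ennreal (K z powr r) \<partial>lborel))"
    using K_Lr by (simp add: less_top)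
  from Young_convolution_inequality_nn(1)[OF _ _ K_nonneg _ exps this _ g_Lp]
  have h_finite: "AE x in lborel. h x < \<infinity>"
    unfolding h_def by simp
  note Young_weighted = Young_convolution_inequality_nn[of "\<lambda>z. norm z powr \<theta> * K z" "\<lambda>y. \<bar>g y\<bar>",
      OF _ _ _ _ exps weighted_K_Lr g_Lp]
  have h\<theta>_finite: "AE x in lborel. h\<theta> x < \<infinity>"
    using Young_weighted(1) K_nonneg unfolding h\<theta>_def by simp
  have h\<theta>_Lq: "(\<integral>\<^sup>+x. ennreal (enn2real (h\<theta> x) powr q) \<partial>lborel)
      \<le> ennreal (W powr (q / r) * N powr (q / p))"
    using Young_weighted(2) K_nonneg unfolding h\<theta>_def by simp
  have [measurable]: "Comm \<in> borel_measurable borel"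
    unfolding Comm_def by measurable
  have "AE x in lborel. \<bar>Comm x\<bar> \<le> L * enn2real (h\<theta> x)"
    using h_finite h\<theta>_finite
    by eventually_elim (auto simp: Comm_def h_def h\<theta>_def
        intro!: commutator_le_weighted_convolution K_nonneg \<phi>_bounded Holder)
  then have "in_Lp q Comm" and "Lp_norm q Comm \<le> L * (W powr (q / r) * N powr (q / p)) powr (1 / q)"
    using Lp_bound_if_AE_le[of Comm "\<lambda>x. enn2real (h\<theta> x)" L q, OF _ _ _ _ _ _ h\<theta>_Lq] Holder(2) exps
    by (auto simp: h\<theta>_def)
  moreover have "(W powr (q / r) * N powr (q / p)) powr (1 / q) = W powr (1 / r) * N powr (1 / p)"
    using exps weighted_K_Lr g_Lp by (simp add: powr_mult powr_powr)
  ultimately show "in_Lp q Comm" and "Lp_norm q Comm \<le> L * W powr (1 / r) * N powr (1 / p)"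
    by (simp_all add: mult.assoc)
qed

lemma convolution_commutator_Lp_bound:
  fixes K \<phi> f :: "'a::euclidean_space \<Rightarrow> real"
  assumes [measurable]: "K \<in> borel_measurable borel" "\<phi> \<in> borel_measurable borel"
    and K_nonneg: "\<And>z. K z \<ge> 0"
    and exps: "p > 1" "r > 1" "q > 0" "1 / p + 1 / r = 1 + 1 / q"
    and K_Lr: "(\<integral>\<^sup>+z. ennreal (K z powr r) \<partial>lborel) < \<infinity>"
    and weighted_K_Lr: "(\<integral>\<^sup>+z. ennreal ((norm z powr \<theta> * K z) powr r) \<partial>lborel) = ennreal W" "W \<ge> 0"
    and \<phi>_bounded: "bounded (range \<phi>)"
    and Holder: "\<And>x y. \<bar>\<phi> x - \<phi> y\<bar> \<le> L * norm (x - y) powr \<theta>" "L \<ge> 0"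
    and f: "in_Lp p f"
  defines "Comm \<equiv> \<lambda>x. \<phi> x * (\<integral>y. f y * K (x - y) \<partial>lebesgue) - (\<integral>y. \<phi> y * f y * K (x - y) \<partial>lebesgue)"
  shows "in_Lp q Comm" and "Lp_norm q Comm \<le> L * W powr (1 / r) * Lp_norm p f"
proof -
  obtain g N where g: "g \<in> borel_measurable borel" and fg: "AE x in lborel. f x = g x"
    and g_Lp: "(\<integral>\<^sup>+x. ennreal (\<bar>g x\<bar> powr p) \<partial>lborel) = ennreal N" "N \<ge> 0"
    and f_norm: "Lp_norm p f = N powr (1 / p)"
    using in_Lp_borel_representative[OF f] by blast
  have f_meas: "f \<in> borel_measurable lebesgue"
    using f by (simp add: in_Lp_def)
  have "\<phi> \<in> borel_measurable lebesgue"
    by (rule measurable_completion) simp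
  then have \<phi>f_meas: "(\<lambda>y. \<phi> y * f y) \<in> borel_measurable lebesgue"
    using f_meas by (rule borel_measurable_times)
  have \<phi>g_meas: "(\<lambda>y. \<phi> y * g y) \<in> borel_measurable borel"
    using g by measurable
  have K_shift: "(\<lambda>y. K (x - y)) \<in> borel_measurable borel" for x
    by measurable
  have \<phi>fg: "AE y in lborel. \<phi> y * f y = \<phi> y * g y"
    using fg by (auto elim!: eventually_mono)
  have "Comm = (\<lambda>x. \<phi> x * (\<integral>y. g y * K (x - y) \<partial>lborel) - (\<integral>y. \<phi> y * g y * K (x - y) \<partial>lborel))"
    unfolding Comm_def
    using lebesgue_integral_mult_eq_lborel_AE[OF f_meas g K_shift fg]
      lebesgue_integral_mult_eq_lborel_AE[OF \<phi>f_meas \<phi>g_meas K_shift \<phi>fg]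
    by simp
  note bound = convolution_commutator_Lp_bound_borel[OF assms(1,2) g K_nonneg exps K_Lr weighted_K_Lr
      \<phi>_bounded Holder g_Lp, folded this]
  show "in_Lp q Comm"
    by (rule bound(1))
  show "Lp_norm q Comm \<le> L * W powr (1 / r) * Lp_norm p f"
    unfolding f_norm by (rule bound(2))
qed

lemma E_op_Young_exponent:
  fixes n \<alpha> \<beta> \<theta> :: real
  defines "p \<equiv> 2 * (n - 1) / (n + \<alpha> - 2)" and "q \<equiv> 2 * n / (n - \<alpha> - 2 * \<beta>)"
  assumes n: "n \<ge> 3" and \<beta>: "\<beta> \<ge> 0" "\<alpha> + \<beta> < n - \<beta>"
    and condition: "(n - \<alpha> - 2 * \<beta>) / (2 * n) + (n - \<alpha>) / (2 * (n - 1)) < 1"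
    and \<theta>: "\<theta> < \<beta> + 1 / q"
  obtains r where "r > 1" "p > 1" "q > 0" "1 / p + 1 / r = 1 + 1 / q"
    "(n - \<alpha>) * r > n - 1" "(n - \<alpha> - \<theta>) * r > n - 1"
    "n - 1 + r * (\<theta> + \<beta> - (n - \<alpha>)) = r * (\<theta> - 1 / q)"
proof -
  have q_inv: "1 / q = (n - \<alpha> - 2 * \<beta>) / (2 * n)" and p_inv: "1 / p = (n + \<alpha> - 2) / (2 * (n - 1))"
    by (simp_all add: p_def q_def)
  have "q > 0"
    using n \<beta> by (simp add: q_def)
  \<comment> \<open>a = 1/r is the kernel exponent for Young's inequality; the hypothesis on (\<alpha>, \<beta>)
    says exactly that r > 1\<close>
  define a where "a = 1 / q + (n - \<alpha>) / (2 * (n - 1))"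
  have "a < 1"
    using condition by (simp add: a_def q_inv)
  have "a > 0"
    unfolding a_def using n \<beta> \<open>q > 0\<close> by (intro add_pos_pos divide_pos_pos) auto
  have "1 / q > 0"
    using \<open>q > 0\<close> by simp
  then have "(n - \<alpha>) / (2 * (n - 1)) < 1"
    using \<open>a < 1\<close> unfolding a_def by linarith
  then have "n - \<alpha> < 2 * (n - 1)"
    using n by (simp add: pos_divide_less_eq)
  then have "p > 1"
    using n \<beta> by (simp add: p_def field_simps)
  have "n - 1 \<noteq> 0"
    using n by simp
  have "(n - 1) * a = (n - 1) * (1 / q) + (n - 1) * ((n - \<alpha>) / (2 * (n - 1)))"
    by (simp only: a_def distrib_left)
  also have "\<dots> = (n - 1) * (1 / q) + (n - \<alpha>) / 2"
    using \<open>n - 1 \<noteq> 0\<close> by (simp add: field_simps)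
  also have "(n - 1) * (1 / q) = n * (1 / q) - 1 / q"
    by (simp add: diff_divide_distrib)
  also have "n * (1 / q) = (n - \<alpha>) / 2 - \<beta>"
    using n by (simp add: q_inv field_simps)
  finally have d_a: "(n - 1) * a = n - \<alpha> - \<beta> - 1 / q"
    by simp
  define r where "r = 1 / a"
  have d_r: "n - 1 = r * (n - \<alpha> - \<beta> - 1 / q)"
    using d_a \<open>a > 0\<close> by (simp add: r_def field_simps)
  have "r > 0"
    using \<open>a > 0\<close> by (simp add: r_def)
  moreover have "\<beta> + 1 / q > 0" "\<beta> + 1 / q - \<theta> > 0"
    using \<open>1 / q > 0\<close> \<beta> \<theta> by linarith+
  ultimately have "r * (\<beta> + 1 / q) > 0" "r * (\<beta> + 1 / q - \<theta>) > 0"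
    by simp_all
  show thesis
  proof (rule that)
    show "r > 1"
      using \<open>a > 0\<close> \<open>a < 1\<close> by (simp add: r_def)
    have "(n + \<alpha> - 2) / (2 * (n - 1)) + (n - \<alpha>) / (2 * (n - 1)) = (n + \<alpha> - 2 + (n - \<alpha>)) / (2 * (n - 1))"
      by (rule add_divide_distrib[symmetric])
    also have "\<dots> = 1"
      using n by simp
    moreover have "1 / r = a"
      by (simp add: r_def)
    ultimately show "1 / p + 1 / r = 1 + 1 / q"
      unfolding p_inv a_def by linarith
    show "(n - \<alpha>) * r > n - 1" "(n - \<alpha> - \<theta>) * r > n - 1"
      "n - 1 + r * (\<theta> + \<beta> - (n - \<alpha>)) = r * (\<theta> - 1 / q)"
      using \<open>r * (\<beta> + 1 / q) > 0\<close> \<open>r * (\<beta> + 1 / q - \<theta>) > 0\<close> unfolding d_r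
      by (simp_all add: algebra_simps)
  qed fact+
qed

lemma E_kernel_commutator_Lp_bound:
  fixes \<beta> s \<theta> p q r t :: real
    and \<phi> f :: "'a::euclidean_space \<Rightarrow> real" and \<phi>' :: "'a \<Rightarrow> ('a \<Rightarrow>\<^sub>L real)"
  defines "J \<equiv> enn2real (\<integral>\<^sup>+w. ennreal ((norm (w::'a) powr \<theta> * E_kernel \<beta> s 1 w) powr r) \<partial>lborel)"
    and "Comm \<equiv> \<lambda>x. \<phi> x * (\<integral>y. f y * E_kernel \<beta> s t (x - y) \<partial>lebesgue)
      - (\<integral>y. \<phi> y * f y * E_kernel \<beta> s t (x - y) \<partial>lebesgue)"
  assumes exps: "p > 1" "r > 1" "q > 0" "1 / p + 1 / r = 1 + 1 / q"
    and kernel_Lr: "2 * s * r > real DIM('a)" and weighted_kernel_Lr: "(2 * s - \<theta>) * r > real DIM('a)"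
    and \<theta>: "0 < \<theta>" "\<theta> \<le> 1"
    and \<phi>_C1: "\<forall>x. (\<phi> has_derivative blinfun_apply (\<phi>' x)) (at x)" "continuous_on UNIV \<phi>'"
      "has_compact_support \<phi>"
    and f: "in_Lp p f" and t: "t > 0"
  shows "in_Lp q Comm"
    and "Lp_norm q Comm
      \<le> 2 * J powr (1 / r) * t powr ((real DIM('a) + r * (\<theta> + \<beta> - 2 * s)) / r) * C1_norm \<phi> \<phi>' * Lp_norm p f"
proof -
  have "r > 0"
    using exps by simp
  note \<phi> = C1_compact_support_Holder[OF \<phi>_C1 \<theta>]
  define W where "W = t powr (real DIM('a) + r * (\<theta> + \<beta> - 2 * s)) * J"
  have "(\<integral>\<^sup>+w. ennreal ((norm (w::'a) powr \<theta> * E_kernel \<beta> s 1 w) powr r) \<partial>lborel) = ennreal J"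
    using nn_integral_weighted_E_kernel_powr_finite[OF \<open>r > 0\<close> _ weighted_kernel_Lr] \<theta>
    by (simp add: J_def less_top)
  then have weighted_kernel: "(\<integral>\<^sup>+z. ennreal ((norm (z::'a) powr \<theta> * E_kernel \<beta> s t z) powr r) \<partial>lborel)
      = ennreal W"
    unfolding nn_integral_weighted_E_kernel_powr_scale[OF t] W_def by (simp add: ennreal_mult')
  have "W \<ge> 0" "2 * C1_norm \<phi> \<phi>' \<ge> 0"
    using \<phi>(3) by (simp_all add: W_def J_def)
  note commutator = convolution_commutator_Lp_bound[OF borel_measurable_E_kernel \<phi>(1) E_kernel_nonneg
      exps nn_integral_E_kernel_powr_finite[OF t \<open>r > 0\<close> kernel_Lr] weighted_kernel
      \<open>W \<ge> 0\<close> \<phi>(2,4) \<open>2 * C1_norm \<phi> \<phi>' \<ge> 0\<close> f, folded Comm_def]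
  show "in_Lp q Comm"
    by (rule commutator(1))
  note commutator(2)
  also have "W powr (1 / r) = J powr (1 / r) * t powr ((real DIM('a) + r * (\<theta> + \<beta> - 2 * s)) / r)"
    using \<open>r > 0\<close> by (simp add: W_def J_def powr_mult powr_powr mult.commute)
  finally show "Lp_norm q Comm
      \<le> 2 * J powr (1 / r) * t powr ((real DIM('a) + r * (\<theta> + \<beta> - 2 * s)) / r) * C1_norm \<phi> \<phi>' * Lp_norm p f"
    by (simp add: mult_ac)
qed

lemma E_op_commutator_estimate:
  fixes \<alpha> \<beta> \<theta> p q r :: real
  assumes exps: "p > 1" "r > 1" "q > 0" "1 / p + 1 / r = 1 + 1 / q"
    and kernel_Lr: "(real DIM('a::euclidean_space) + 1 - \<alpha>) * r > real DIM('a)"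
      "(real DIM('a) + 1 - \<alpha> - \<theta>) * r > real DIM('a)"
    and \<theta>: "0 < \<theta>" "\<theta> \<le> 1"
  shows "\<exists>C>0. \<forall>(\<phi>::'a \<Rightarrow> real) \<phi>' (f::'a \<Rightarrow> real) t.
     (\<forall>x. (\<phi> has_derivative blinfun_apply (\<phi>' x)) (at x)) \<and> continuous_on UNIV \<phi>' \<and>
     has_compact_support \<phi> \<and> in_Lp p f \<and> t > 0 \<longrightarrow>
       in_Lp q (\<lambda>x. \<phi> x * E_op \<alpha> \<beta> f x t - E_op \<alpha> \<beta> (\<lambda>y. \<phi> y * f y) x t) \<and>
       Lp_norm q (\<lambda>x. \<phi> x * E_op \<alpha> \<beta> f x t - E_op \<alpha> \<beta> (\<lambda>y. \<phi> y * f y) x t)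
         \<le> C * t powr ((real DIM('a) + r * (\<theta> + \<beta> - (real DIM('a) + 1 - \<alpha>))) / r)
           * C1_norm \<phi> \<phi>' * Lp_norm p f"
proof -
  define s where "s = (real DIM('a) + 1 - \<alpha>) / 2"
  have two_s: "real DIM('a) + 1 - \<alpha> = 2 * s"
    by (simp add: s_def)
  define J where "J = enn2real (\<integral>\<^sup>+w. ennreal ((norm (w::'a) powr \<theta> * E_kernel \<beta> s 1 w) powr r) \<partial>lborel)"
  have E_op_convolution: "E_op \<alpha> \<beta> u x t = (\<integral>y. u y * E_kernel \<beta> s t (x - y) \<partial>lebesgue)"
    for u :: "'a \<Rightarrow> real" and x t
    by (simp add: E_op_eq_convolution s_def)
  show ?thesis
    unfolding two_s
  proof (intro exI[of _ "2 * J powr (1 / r) + 1"] conjI allI impI)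
    fix \<phi> :: "'a \<Rightarrow> real" and \<phi>' and f :: "'a \<Rightarrow> real" and t :: real
    assume "(\<forall>x. (\<phi> has_derivative blinfun_apply (\<phi>' x)) (at x)) \<and> continuous_on UNIV \<phi>' \<and>
      has_compact_support \<phi> \<and> in_Lp p f \<and> t > 0"
    then have \<phi>: "\<forall>x. (\<phi> has_derivative blinfun_apply (\<phi>' x)) (at x)" "continuous_on UNIV \<phi>'"
      "has_compact_support \<phi>" and f: "in_Lp p f" and t: "t > 0"
      by auto
    note bound = E_kernel_commutator_Lp_bound[where \<beta> = \<beta> and s = s and \<theta> = \<theta> and r = r,
        OF exps kernel_Lr[unfolded two_s] \<theta> \<phi> f t, folded J_def E_op_convolution]
    show "in_Lp q (\<lambda>x. \<phi> x * E_op \<alpha> \<beta> f x t - E_op \<alpha> \<beta> (\<lambda>y. \<phi> y * f y) x t)"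
      by (rule bound(1))
    note bound(2)
    also have "2 * J powr (1 / r) * t powr ((real DIM('a) + r * (\<theta> + \<beta> - 2 * s)) / r) * C1_norm \<phi> \<phi>' * Lp_norm p f
        \<le> (2 * J powr (1 / r) + 1) * t powr ((real DIM('a) + r * (\<theta> + \<beta> - 2 * s)) / r)
          * C1_norm \<phi> \<phi>' * Lp_norm p f"
      using C1_compact_support_Holder(3)[OF \<phi> \<theta>] by (intro mult_right_mono) (auto simp: Lp_norm_def)
    finally show "Lp_norm q (\<lambda>x. \<phi> x * E_op \<alpha> \<beta> f x t - E_op \<alpha> \<beta> (\<lambda>y. \<phi> y * f y) x t)
        \<le> (2 * J powr (1 / r) + 1) * t powr ((real DIM('a) + r * (\<theta> + \<beta> - 2 * s)) / r)
          * C1_norm \<phi> \<phi>' * Lp_norm p f" .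
  qed (simp add: add_nonneg_pos)
qed

theorem lemma2p2:
  fixes \<alpha> \<beta> \<theta> :: real
    and n p q :: real
  defines "n \<equiv> real DIM('a::euclidean_space) + 1"
    and "p \<equiv> 2 * (n - 1) / (n + \<alpha> - 2)"
    and "q \<equiv> 2 * n / (n - \<alpha> - 2 * \<beta>)"
  assumes "n \<ge> 3"
    and "\<beta> \<ge> 0" and "0 < \<alpha> + \<beta>" and "\<alpha> + \<beta> < n - \<beta>"
    and "(n - \<alpha> - 2 * \<beta>) / (2 * n) + (n - \<alpha>) / (2 * (n - 1)) < 1"
    and "0 < \<theta>" and "\<theta> < min 1 (\<beta> + 1 / q)"
  shows "\<exists>C>0. \<forall>(\<phi>::'a \<Rightarrow> real) \<phi>' (f::'a \<Rightarrow> real) t.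
     (\<forall>x. (\<phi> has_derivative blinfun_apply (\<phi>' x)) (at x)) \<and> continuous_on UNIV \<phi>' \<and>
     has_compact_support \<phi> \<and> in_Lp p f \<and> t > 0 \<longrightarrow>
       in_Lp q (\<lambda>x. \<phi> x * E_op \<alpha> \<beta> f x t - E_op \<alpha> \<beta> (\<lambda>y. \<phi> y * f y) x t) \<and>
       Lp_norm q (\<lambda>x. \<phi> x * E_op \<alpha> \<beta> f x t - E_op \<alpha> \<beta> (\<lambda>y. \<phi> y * f y) x t)
         \<le> C * t powr (\<theta> - 1 / q) * C1_norm \<phi> \<phi>' * Lp_norm p f"
proof -
  have \<theta>: "\<theta> \<le> 1" "\<theta> < \<beta> + 1 / q"
    using assms(10) by auto
  obtain r where exps: "p > 1" "r > 1" "q > 0" "1 / p + 1 / r = 1 + 1 / q"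
    and kernel_Lr: "(n - \<alpha>) * r > n - 1" "(n - \<alpha> - \<theta>) * r > n - 1"
    and scaling: "n - 1 + r * (\<theta> + \<beta> - (n - \<alpha>)) = r * (\<theta> - 1 / q)"
    using E_op_Young_exponent[where n = n and \<alpha> = \<alpha> and \<beta> = \<beta> and \<theta> = \<theta>, folded p_def q_def,
        OF assms(4,5,7,8) \<theta>(2)] .
  have "(real DIM('a) + 1 - \<alpha>) * r > real DIM('a)" "(real DIM('a) + 1 - \<alpha> - \<theta>) * r > real DIM('a)"
    and exponent: "(real DIM('a) + r * (\<theta> + \<beta> - (real DIM('a) + 1 - \<alpha>))) / r = \<theta> - 1 / q"
    using kernel_Lr scaling exps(2) by (simp_all add: n_def)
  from E_op_commutator_estimate[where 'a = 'a and \<beta> = \<beta>, OF exps this(1,2) assms(9) \<theta>(1)]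
  show ?thesis
    unfolding exponent .
qed

end
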